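(* Let $n\ge1$ and let $\delta_1,\ldots,\delta_n>0$ with $\min_j\delta_j<\max_j\delta_j$. Then for every $\xi>0$, $$\int_0^\infty s^{n-1}\prod_{j=1}^n(1+\delta_js)^{-1-\xi}\,ds<\frac{B(n,n\xi)}{\prod_{j=1}^n\delta_j},$$ where $B(\cdot,\cdot)$ is the beta function. *)

theory Defs
  imports "HOL-Analysis.Analysis"
begin

end

theory Submission
  imports Defs "HOL-Real_Asymp.Real_Asymp"
begin

text \<open>
  Let G be the geometric mean of the numbers \<delta> j and put x j = \<delta> j * s with s > 0. AM-GM, applied
  once to the numbers 1 / (1 + x j) and once to the numbers x j / (1 + x j), whose arithmetic means
  add up to 1, gives (1 + G s)^n \<le> \<Prod>j (1 + x j). The inequality is strict when two \<delta> j differ: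
  replacing both by their geometric mean keeps G but lowers the product. Hence the integrand lies
  strictly below s^(n - 1) (1 + G s)^(-n(1 + \<xi>)), whose integral over (0, \<infinity>) is B(n, n \<xi>) / G^n
  by the substitution s = u / (G (1 - u)).
\<close>

lemma set_integral_strict_mono_nonneg:
  fixes f g :: "_ \<Rightarrow> real"
  assumes g: "set_integrable M A g" and f: "set_borel_measurable M A f"
    and A: "A \<in> sets M" "A \<notin> null_sets M"
    and f_nonneg: "\<And>x. x \<in> A \<Longrightarrow> 0 \<le> f x" and less: "\<And>x. x \<in> A \<Longrightarrow> f x < g x"
  shows "set_integrable M A f" and "(LINT x:A|M. f x) < (LINT x:A|M. g x)"
proof -
  have "norm (f x) \<le> norm (g x)" if "x \<in> A" for x
    using f_nonneg[OF that] less[OF that] by simp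
  then have "AE x in M. x \<in> A \<longrightarrow> norm (f x) \<le> norm (g x)"
    by (intro AE_I2) simp
  then show f_int: "set_integrable M A f"
    by (rule set_integrable_bound[OF g f])
  have "(LINT x:A|M. f x) \<le> (LINT x:A|M. g x)"
    using f_int g less by (intro set_integral_mono) (auto intro: less_imp_le)
  moreover have "(LINT x:A|M. f x) \<noteq> (LINT x:A|M. g x)"
  proof
    assume eq: "(LINT x:A|M. f x) = (LINT x:A|M. g x)"
    let ?D = "\<lambda>x. indicator A x *\<^sub>R (g x - f x)"
    have "integrable M ?D"
      using set_integral_diff(1)[OF g f_int] by (simp add: set_integrable_def)
    moreover have "(LINT x:A|M. ?D x) = (LINT x:A|M. g x - f x)"
      by (rule set_lebesgue_integral_cong) (auto simp: A)
    ultimately have "A \<in> null_sets M"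
      using eq set_integral_diff(2)[OF g f_int] less
      by (intro null_if_pos_func_has_zero_int[OF _ A(1)]) auto
    with A(2) show False ..
  qed
  ultimately show "(LINT x:A|M. f x) < (LINT x:A|M. g x)"
    by simp
qed

lemma Beta_set_integral:
  fixes a b :: real
  assumes "a > 0" "b > 0"
  shows "set_integrable lborel {0<..<1} (\<lambda>u. u powr (a - 1) * (1 - u) powr (b - 1))"
    and "(LBINT u:{0<..<1}. u powr (a - 1) * (1 - u) powr (b - 1)) = Beta a b"
proof -
  let ?B = "\<lambda>u::real. u powr (a - 1) * (1 - u) powr (b - 1)"
  have has_int: "(?B has_integral Beta a b) {0<..<1}"
    using has_integral_Beta_real[of a b] assms by (simp add: has_integral_Icc_iff_Ioo)
  have "?B absolutely_integrable_on {0<..<1}"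
    using has_int by (intro nonnegative_absolutely_integrable_1) (auto simp: has_integral_integrable)
  moreover have "(\<lambda>u. indicator {0<..<1} u *\<^sub>R ?B u) \<in> borel_measurable lborel"
    by measurable
  ultimately show int: "set_integrable lborel {0<..<1} ?B"
    unfolding set_integrable_def using integrable_completion by blast
  show "(LBINT u:{0<..<1}. ?B u) = Beta a b"
    using set_borel_integral_eq_integral(2)[OF int] has_int integral_unique by metis
qed

lemma Beta_set_integral_Ioi:
  fixes a b c :: real
  assumes a: "a > 0" and b: "b > 0" and c: "c > 0"
  shows "set_integrable lborel {0<..} (\<lambda>s. s powr (a - 1) * (1 + c * s) powr (- (a + b)))"
    and "(LBINT s:{0<..}. s powr (a - 1) * (1 + c * s) powr (- (a + b))) = Beta a b / c powr a"
proof -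
  define F where "F = (\<lambda>s::real. s powr (a - 1) * (1 + c * s) powr (- (a + b)))"
  define g where "g = (\<lambda>u::real. u / (c * (1 - u)))"
  define g' where "g' = (\<lambda>u::real. 1 / (c * (1 - u)\<^sup>2))"
  have subst_eq: "F (g u) * g' u = u powr (a - 1) * (1 - u) powr (b - 1) / c powr a"
    if u: "0 < u" "u < 1" for u
  proof -
    have "1 + c * g u = 1 / (1 - u)"
      using u c by (simp add: g_def field_simps)
    then have "(1 + c * g u) powr (- (a + b)) = (1 - u) powr ((a - 1) + (b - 1) + 2)"
      using u by (simp only: powr_minus) (simp add: powr_divide)
    then have "(1 + c * g u) powr (- (a + b)) = (1 - u) powr (a - 1) * (1 - u) powr (b - 1) * (1 - u)\<^sup>2"
      using u by (simp only: powr_add powr_numeral)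
    moreover have "g u powr (a - 1) = u powr (a - 1) / (c powr (a - 1) * (1 - u) powr (a - 1))"
      using u c by (simp add: g_def powr_divide powr_mult)
    moreover have "c powr a = c powr (a - 1) * c"
      using powr_add[of c "a - 1" 1] c by simp
    ultimately show ?thesis
      using u c by (simp add: F_def g'_def field_simps)
  qed
  have unit_interval: "einterval 0 1 = {0<..<1::real}"
    by (simp add: zero_ereal_def one_ereal_def)
  have half_line: "einterval 0 \<infinity> = {0::real<..}"
    by (simp add: zero_ereal_def)
  have "set_integrable lborel {0<..<1} (\<lambda>u. u powr (a - 1) * (1 - u) powr (b - 1) / c powr a)"
    using Beta_set_integral(1)[OF a b] by (rule set_integrable_divide)
  then have FG_int: "set_integrable lborel (einterval 0 1) (\<lambda>u. F (g u) * g' u)"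
    unfolding unit_interval by (rule set_integrable_cong[THEN iffD2, rotated -1]) (auto simp: subst_eq)
  have "(LBINT u:einterval 0 1. F (g u) * g' u)
      = (LBINT u:{0<..<1}. u powr (a - 1) * (1 - u) powr (b - 1) / c powr a)"
    unfolding unit_interval by (rule set_lebesgue_integral_cong) (auto simp: subst_eq)
  also have "\<dots> = Beta a b / c powr a"
    by (simp add: set_integral_divide_zero Beta_set_integral(2)[OF a b])
  finally have FG_val: "(LBINT u:einterval 0 1. F (g u) * g' u) = Beta a b / c powr a" .
  have "(g \<longlongrightarrow> 0) (at_right 0)" "LIM u at_left 1. g u :> at_top"
    unfolding g_def using c by real_asymp+
  then have lims: "((ereal \<circ> g \<circ> real_of_ereal) \<longlongrightarrow> 0) (at_right 0)"
      "((ereal \<circ> g \<circ> real_of_ereal) \<longlongrightarrow> \<infinity>) (at_left 1)"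
    by (simp_all add: zero_ereal_def one_ereal_def ereal_tendsto_simps)
  have g'_nonneg: "0 \<le> g' u" for u
    unfolding g'_def using c by simp
  have subst_conds: "(g has_real_derivative g' u) (at u)" "isCont F (g u)" "isCont g' u" "0 \<le> F (g u)"
    if "0 < ereal u" "ereal u < 1" for u
  proof -
    from that have u: "0 < u" "u < 1"
      by (simp_all add: zero_ereal_def one_ereal_def)
    then show "(g has_real_derivative g' u) (at u)"
      using c unfolding g_def g'_def
      by (auto intro!: derivative_eq_intros simp: divide_simps power2_eq_square) (simp add: algebra_simps)
    have "0 < 1 + c * g u"
      using u c by (simp add: g_def add_pos_nonneg)
    then show "isCont F (g u)"
      unfolding F_def using u c by (intro continuous_intros) (auto simp: g_def)
    show "isCont g' u"
      unfolding g'_def using u c by (intro continuous_intros) auto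
    show "0 \<le> F (g u)"
      unfolding F_def by simp
  qed
  have "set_integrable lborel (einterval 0 \<infinity>) F"
    "(LBINT s=0..\<infinity>. F s) = (LBINT u=0..1. F (g u) * g' u)"
    using interval_integral_substitution_nonneg[OF _ subst_conds g'_nonneg lims FG_int] by simp_all
  then show "set_integrable lborel {0<..} F" "(LBINT s:{0<..}. F s) = Beta a b / c powr a"
    using FG_val by (simp_all add: half_line interval_lebesgue_integral_def)
qed

lemma power_one_plus_geometric_mean_le_prod:
  fixes x :: "'a \<Rightarrow> real"
  assumes S: "finite S" "S \<noteq> {}" and x: "\<And>i. i \<in> S \<Longrightarrow> x i \<ge> 0"
  shows "(1 + (\<Prod>i\<in>S. x i) powr (1 / card S)) ^ card S \<le> (\<Prod>i\<in>S. 1 + x i)"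
proof -
  define P where "P = (\<Prod>i\<in>S. 1 + x i)"
  have P: "P > 0"
    unfolding P_def using x by (intro prod_pos) (auto simp: add_pos_nonneg)
  have k: "card S > 0"
    using S by (simp add: card_gt_0_iff)
  have "(\<Prod>i\<in>S. 1 / (1 + x i)) powr (1 / card S) \<le> (\<Sum>i\<in>S. (1 / (1 + x i)) / card S)"
    using x by (intro arith_geom_mean S) auto
  moreover have "(\<Prod>i\<in>S. x i / (1 + x i)) powr (1 / card S) \<le> (\<Sum>i\<in>S. (x i / (1 + x i)) / card S)"
    using x by (intro arith_geom_mean S) auto
  moreover have "(\<Sum>i\<in>S. (1 / (1 + x i)) / card S) + (\<Sum>i\<in>S. (x i / (1 + x i)) / card S) = 1"
  proof -
    have "(1 / (1 + x i)) / card S + (x i / (1 + x i)) / card S = 1 / card S" if "i \<in> S" for i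
      using x[OF that] by (simp add: add_divide_distrib[symmetric])
    then show ?thesis
      using k by (simp add: sum.distrib[symmetric])
  qed
  ultimately have "(1 / P) powr (1 / card S) + ((\<Prod>i\<in>S. x i) / P) powr (1 / card S) \<le> 1"
    unfolding P_def by (simp add: prod_dividef)
  then have "1 + (\<Prod>i\<in>S. x i) powr (1 / card S) \<le> P powr (1 / card S)"
    using P x by (simp add: powr_divide prod_nonneg add_divide_distrib[symmetric] divide_le_eq)
  then have "(1 + (\<Prod>i\<in>S. x i) powr (1 / card S)) ^ card S \<le> (P powr (1 / card S)) ^ card S"
    by (intro power_mono) auto
  also have "\<dots> = P"
    using P k by (simp add: powr_realpow[symmetric] powr_powr)
  finally show ?thesis
    unfolding P_def .
qed

lemma power_one_plus_geometric_mean_less_prod: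
  fixes x :: "'a \<Rightarrow> real"
  assumes S: "finite S" and ab: "a \<in> S" "b \<in> S" "x a \<noteq> x b"
    and x: "\<And>i. i \<in> S \<Longrightarrow> x i > 0"
  shows "(1 + (\<Prod>i\<in>S. x i) powr (1 / card S)) ^ card S < (\<Prod>i\<in>S. 1 + x i)"
proof -
  have "a \<noteq> b"
    using ab by auto
  then have split: "prod f S = f a * f b * prod f (S - {a, b})" for f :: "'a \<Rightarrow> real"
    using S ab by (simp add: prod.remove[of S a] prod.remove[of "S - {a}" b] Diff_insert2[symmetric])
  define p q where "p = sqrt (x a)" and "q = sqrt (x b)"
  have p: "p * p = x a" and q: "q * q = x b"
    using x ab by (simp_all add: p_def q_def less_imp_le)
  define y where "y = x(a := p * q, b := p * q)"
  have y_rest: "prod (\<lambda>i. f (y i)) (S - {a, b}) = prod (\<lambda>i. f (x i)) (S - {a, b})" for f :: "real \<Rightarrow> real"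
    by (intro prod.cong) (auto simp: y_def)
  have "(1 + x a) * (1 + x b) - (1 + p * q)\<^sup>2 = (p - q)\<^sup>2"
    by (simp add: p[symmetric] q[symmetric] power2_eq_square algebra_simps)
  moreover have "(p - q)\<^sup>2 > 0"
    using p q ab(3) by auto
  ultimately have smoothing: "(1 + p * q)\<^sup>2 < (1 + x a) * (1 + x b)"
    by linarith
  have rest_pos: "(\<Prod>i\<in>S - {a, b}. 1 + x i) > 0"
    using x by (intro prod_pos) (auto intro: add_pos_pos)
  have "(\<Prod>i\<in>S. y i) = (\<Prod>i\<in>S. x i)"
  proof -
    have "(p * q) * (p * q) = x a * x b"
      unfolding p[symmetric] q[symmetric] by (simp add: ac_simps)
    then show ?thesis
      using split[of y] split[of x] y_rest[of id] \<open>a \<noteq> b\<close> by (simp add: y_def)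
  qed
  then have "(1 + (\<Prod>i\<in>S. x i) powr (1 / card S)) ^ card S = (1 + (\<Prod>i\<in>S. y i) powr (1 / card S)) ^ card S"
    by simp
  also have "\<dots> \<le> (\<Prod>i\<in>S. 1 + y i)"
    using S ab x by (intro power_one_plus_geometric_mean_le_prod) (auto simp: y_def p_def q_def less_imp_le)
  also have "\<dots> = (1 + p * q)\<^sup>2 * (\<Prod>i\<in>S - {a, b}. 1 + x i)"
    using split[of "\<lambda>i. 1 + y i"] y_rest[of "\<lambda>t. 1 + t"] \<open>a \<noteq> b\<close> by (simp add: y_def power2_eq_square)
  also have "\<dots> < (1 + x a) * (1 + x b) * (\<Prod>i\<in>S - {a, b}. 1 + x i)"
    using smoothing rest_pos by simp
  also have "\<dots> = (\<Prod>i\<in>S. 1 + x i)"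
    using split[of "\<lambda>i. 1 + x i"] by simp
  finally show ?thesis .
qed

lemma prod_powr_less_geometric_mean_powr:
  fixes d :: "'a \<Rightarrow> real"
  assumes S: "finite S" and ab: "a \<in> S" "b \<in> S" "d a \<noteq> d b"
    and d: "\<And>i. i \<in> S \<Longrightarrow> d i > 0" and s: "s > 0" and \<xi>: "\<xi> > -1"
  shows "(\<Prod>i\<in>S. (1 + d i * s) powr (-1 - \<xi>))
    < (1 + (\<Prod>i\<in>S. d i) powr (1 / card S) * s) powr (- (real (card S) + real (card S) * \<xi>))"
proof -
  define G where "G = (\<Prod>i\<in>S. d i) powr (1 / card S)"
  have k: "card S > 0"
    using S ab by (auto simp: card_gt_0_iff)
  have "(\<Prod>i\<in>S. d i * s) powr (1 / card S) = G * (s ^ card S) powr (1 / card S)"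
    unfolding G_def prod.distrib using d s by (simp add: powr_mult prod_nonneg less_imp_le)
  also have "(s ^ card S) powr (1 / card S) = s"
    using s k by (simp add: powr_realpow[symmetric] powr_powr)
  finally have "(1 + G * s) ^ card S < (\<Prod>i\<in>S. 1 + d i * s)"
    using power_one_plus_geometric_mean_less_prod[of S a b "\<lambda>i. d i * s"] S ab d s by auto
  moreover have "0 < 1 + G * s"
    using s by (simp add: G_def add_pos_nonneg)
  ultimately have "(\<Prod>i\<in>S. 1 + d i * s) powr (-1 - \<xi>) < ((1 + G * s) ^ card S) powr (-1 - \<xi>)"
    using \<xi> by (intro powr_less_mono2_neg) auto
  also have "((1 + G * s) ^ card S) powr (-1 - \<xi>) = (1 + G * s) powr (- (real (card S) + real (card S) * \<xi>))"
    using \<open>0 < 1 + G * s\<close> by (simp add: powr_realpow[symmetric] powr_powr algebra_simps)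
  finally show ?thesis
    using d s by (simp add: G_def prod_powr_distrib add_nonneg_nonneg less_imp_le)
qed

lemma Ioi_not_null_sets_lborel: "{a::real<..} \<notin> null_sets lborel"
proof
  assume "{a<..} \<in> null_sets lborel"
  then have "{a<..<a + 1} \<in> null_sets lborel"
    by (rule null_sets_subset) auto
  then show False
    by (simp add: null_sets_def)
qed

theorem lemma7:
  fixes n :: nat and \<delta> :: "nat \<Rightarrow> real" and \<xi> :: real
  assumes "n \<ge> 1"
    and "\<And>j. j \<in> {1..n} \<Longrightarrow> \<delta> j > 0"
    and "Min (\<delta> ` {1..n}) < Max (\<delta> ` {1..n})"
    and "\<xi> > 0"
  shows "set_integrable lborel {0<..} (\<lambda>s. s ^ (n - 1) * (\<Prod>j=1..n. (1 + \<delta> j * s) powr (-1 - \<xi>)))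
    \<and> (LBINT s:{0<..}. s ^ (n - 1) * (\<Prod>j=1..n. (1 + \<delta> j * s) powr (-1 - \<xi>)))
        < Beta (real n) (real n * \<xi>) / (\<Prod>j=1..n. \<delta> j)"
proof -
  note n = assms(1) and \<delta> = assms(2) and \<xi> = assms(4)
  define f where "f = (\<lambda>s. s ^ (n - 1) * (\<Prod>j=1..n. (1 + \<delta> j * s) powr (-1 - \<xi>)))"
  define G where "G = (\<Prod>j=1..n. \<delta> j) powr (1 / n)"
  define h where "h = (\<lambda>s::real. s powr (real n - 1) * (1 + G * s) powr (- (real n + real n * \<xi>)))"
  have "Min (\<delta> ` {1..n}) \<in> \<delta> ` {1..n}" "Max (\<delta> ` {1..n}) \<in> \<delta> ` {1..n}"
    using n by (auto intro!: Min_in Max_in)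
  then obtain a b where ab: "a \<in> {1..n}" "b \<in> {1..n}" "\<delta> a \<noteq> \<delta> b"
    using assms(3) by (metis imageE less_irrefl)
  have less: "f s < h s" if "s \<in> {0<..}" for s
    using prod_powr_less_geometric_mean_powr[OF _ ab \<delta>, of s \<xi>] that n \<xi>
    by (simp add: f_def h_def G_def powr_realpow[symmetric] of_nat_diff)
  have "(\<Prod>j=1..n. \<delta> j) > 0"
    using \<delta> by (intro prod_pos) auto
  then have G: "G > 0" "G powr real n = (\<Prod>j=1..n. \<delta> j)"
    using n unfolding G_def powr_gt_zero by (linarith, simp add: powr_powr)
  have h: "set_integrable lborel {0<..} h" "(LBINT s:{0<..}. h s) = Beta n (n * \<xi>) / (\<Prod>j=1..n. \<delta> j)"
    using Beta_set_integral_Ioi[of n "n * \<xi>" G] n \<xi> G by (simp_all add: h_def)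
  have "set_borel_measurable lborel {0<..} f"
    unfolding set_borel_measurable_def f_def by measurable
  moreover have "0 \<le> f s" if "s \<in> {0<..}" for s
    unfolding f_def using that by (intro mult_nonneg_nonneg prod_nonneg) auto
  ultimately show ?thesis
    using set_integral_strict_mono_nonneg[OF h(1) _ _ Ioi_not_null_sets_lborel _ less] h(2)
    unfolding f_def by simp
qed

end
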